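(* Let $r>0$ and $k\ge1$ be an integer. Let $\mathcal N=(G,\beta,r)$ be a multi-path network of length $k$ with nodes $v_0,\dots,v_k$, where every arc joins two consecutive nodes, and for $i=1,\dots,k$ let $A_i$ be the set of arcs joining $v_{i-1}$ and $v_i$. Let $s=v_0$, $t=v_k$, and let $(\pi,f)$ be a potential-based $(s,t)$-flow of value $d>0$ in $\mathcal N$. If $\pi\in[0,\bar\pi]^V$ for some $\bar\pi>0$, then $$\frac{1}{k\sqrt[r]{k}}\sum_{i=1}^k\sum_{a\in A_i}\mu_a\geq\frac{d}{\sqrt[r]{\bar\pi}},$$ where $\mu_a=\beta_a^{-1/r}$.
   Context: A potential-based flow network $\mathcal N=(G,\beta,r)$ consists of a weakly connected directed multigraph $G=(V,A)$ without loops, resistances $\beta\in\mathbb{R}^A_{>0}$ and a degree $r>0$; the conductance of arc $a$ is $\mu_a=\beta_a^{-1/r}$. A potential-based $(s,t)$-flow of value $d$ is a pair $(\pi,f)\in\mathbb{R}^V\times\mathbb{R}^A$ with $\pi_u-\pi_v=\beta_a\,\mathrm{sign}(f_a)|f_a|^r$ for every arc $a=(u,v)$ and $\sum_{a\in\delta^+(v)}f_a-\sum_{a\in\delta^-(v)}f_a=b_v$ for all $v\in V$, where $b=d(\chi_s-\chi_t)$, $\chi_v$ the unit vector of $v$, and $\delta^+(v)$, $\delta^-(v)$ are the arcs leaving, resp. entering, $v$. *)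

theory Defs
  imports Complex_Main
begin

text \<open>A directed multigraph on vertex set V, with arc set A (abstract arc type 'a),
  tail/head maps tail, head.  Nodes of a multi-path network of length k are v_i = i, i = 0..k.\<close>

definition joins :: "('a \<Rightarrow> nat) \<Rightarrow> ('a \<Rightarrow> nat) \<Rightarrow> 'a \<Rightarrow> nat \<Rightarrow> nat \<Rightarrow> bool" where
  "joins tail head a u v \<longleftrightarrow> (tail a = u \<and> head a = v) \<or> (tail a = v \<and> head a = u)"

text \<open>Multi-path network of length k: vertices 0..k, finitely many arcs, every arc joins
  two consecutive nodes (in either direction); weak connectivity means every pair of
  consecutive nodes is joined by at least one arc.\<close>
definition multi_path_network :: "nat \<Rightarrow> 'a set \<Rightarrow> ('a \<Rightarrow> nat) \<Rightarrow> ('a \<Rightarrow> nat) \<Rightarrow> bool" where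
  "multi_path_network k A tail head \<longleftrightarrow>
     k \<ge> 1 \<and> finite A \<and>
     (\<forall>a\<in>A. \<exists>i\<in>{1..k}. joins tail head a (i - 1) i) \<and>
     (\<forall>i\<in>{1..k}. \<exists>a\<in>A. joins tail head a (i - 1) i)"

definition arcs_between :: "'a set \<Rightarrow> ('a \<Rightarrow> nat) \<Rightarrow> ('a \<Rightarrow> nat) \<Rightarrow> nat \<Rightarrow> 'a set" where
  "arcs_between A tail head i = {a\<in>A. joins tail head a (i - 1) i}"

definition conductance :: "('a \<Rightarrow> real) \<Rightarrow> real \<Rightarrow> 'a \<Rightarrow> real" where
  "conductance \<beta> r a = \<beta> a powr (- 1 / r)"

definition potential_flow ::
  "'v set \<Rightarrow> 'a set \<Rightarrow> ('a \<Rightarrow> 'v) \<Rightarrow> ('a \<Rightarrow> 'v) \<Rightarrow> ('a \<Rightarrow> real) \<Rightarrow> real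
   \<Rightarrow> 'v \<Rightarrow> 'v \<Rightarrow> real \<Rightarrow> ('v \<Rightarrow> real) \<Rightarrow> ('a \<Rightarrow> real) \<Rightarrow> bool" where
  "potential_flow V A tail head \<beta> r s t d \<pi> f \<longleftrightarrow>
     (\<forall>a\<in>A. \<pi> (tail a) - \<pi> (head a) = \<beta> a * sgn (f a) * \<bar>f a\<bar> powr r) \<and>
     (\<forall>v\<in>V. (\<Sum>a\<in>{a\<in>A. tail a = v}. f a) - (\<Sum>a\<in>{a\<in>A. head a = v}. f a)
              = d * ((if v = s then 1 else 0) - (if v = t then 1 else 0)))"

end

theory Submission
  imports Defs "HOL-Analysis.Analysis"
begin

(* Orient every arc of the i-th layer A_i from v_(i-1) to v_i. Summing flow conservation over the
   nodes v_i, ..., v_k shows that the oriented flow through every layer is d, while all arcs of A_i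
   see the same potential drop D_i = \<pi>(v_(i-1)) - \<pi>(v_i). Inverting the potential law, the flow on an
   arc a of A_i is D_i^(1/r) \<mu>_a; hence D_i > 0 and \<Sum>_(a \<in> A_i) \<mu>_a = d D_i^(-1/r). The drops telescope
   to \<pi>(s) - \<pi>(t) \<le> \<pi>bar, and Jensen's inequality for the convex function x^(-1/r) yields
   \<Sum>_i D_i^(-1/r) \<ge> k^(1 + 1/r) \<pi>bar^(-1/r). *)

lemma convex_on_powr_neg:
  assumes "p > 0"
  shows "convex_on {0<..} (\<lambda>x::real. x powr (- p))"
proof (rule f''_ge0_imp_convex)
  fix x :: real
  assume x: "x \<in> {0<..}"
  show "((\<lambda>x. x powr (- p)) has_real_derivative - p * x powr (- p - 1)) (at x)"
    using x by (intro derivative_eq_intros) auto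
  show "((\<lambda>x. - p * x powr (- p - 1)) has_real_derivative
      - p * ((- p - 1) * x powr (- p - 1 - 1))) (at x)"
    using x by (intro derivative_eq_intros) auto
  have "- p * ((- p - 1) * x powr (- p - 1 - 1)) = p * (p + 1) * x powr (- p - 1 - 1)"
    by algebra
  also have "\<dots> \<ge> 0"
    using assms by (intro mult_nonneg_nonneg) auto
  finally show "0 \<le> - p * ((- p - 1) * x powr (- p - 1 - 1))" .
qed simp

lemma sum_powr_neg_lower_bound:
  fixes x :: "'i \<Rightarrow> real"
  assumes p: "p > 0" and I: "finite I" "I \<noteq> {}"
    and pos: "\<forall>i\<in>I. x i > 0" and le: "sum x I \<le> P"
  shows "card I powr (1 + p) * P powr (- p) \<le> (\<Sum>i\<in>I. x i powr (- p))"
proof -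
  let ?n = "real (card I)"
  have n: "?n > 0" using I by (simp add: card_gt_0_iff)
  have S: "sum x I > 0" using I pos by (intro sum_pos) auto
  have "(\<Sum>i\<in>I. (1 / ?n) *\<^sub>R x i) powr (- p) \<le> (\<Sum>i\<in>I. (1 / ?n) * x i powr (- p))"
    by (rule convex_on_sum[OF I convex_on_powr_neg[OF p]]) (use n pos in auto)
  then have mean: "(sum x I / ?n) powr (- p) \<le> (\<Sum>i\<in>I. x i powr (- p)) / ?n"
    by (simp add: sum_distrib_left sum_divide_distrib)
  have "(P / ?n) powr (- p) \<le> (sum x I / ?n) powr (- p)"
    by (rule powr_mono2') (use p S n le in \<open>simp_all add: divide_right_mono\<close>)
  also note mean
  finally have "?n * (P / ?n) powr (- p) \<le> (\<Sum>i\<in>I. x i powr (- p))"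
    using pos_le_divide_eq[OF n] by (metis mult.commute)
  moreover have "?n * (P / ?n) powr (- p) = ?n powr (1 + p) * P powr (- p)"
    using n by (simp add: powr_divide powr_minus_divide powr_add)
  ultimately show ?thesis by simp
qed

lemma sum_pred_diff_telescope:
  fixes g :: "nat \<Rightarrow> 'a::ab_group_add"
  shows "(\<Sum>i=1..k. g (i - 1) - g i) = g 0 - g k"
  by (induction k) auto

lemma sgn_powr_inverse:
  fixes b r x y :: real
  assumes "b > 0" "r > 0" "x = b * sgn y * \<bar>y\<bar> powr r"
  shows "y = sgn x * (\<bar>x\<bar> / b) powr (1 / r)"
proof (cases "y = 0")
  case True
  then show ?thesis using assms by simp
next
  case False
  then have "\<bar>y\<bar> powr r > 0" by simp
  then have "\<bar>x\<bar> / b = \<bar>y\<bar> powr r" "sgn x = sgn y"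
    using assms by (auto simp: abs_mult sgn_mult)
  then show ?thesis
    using assms(2) by (simp add: powr_powr sgn_mult_abs)
qed

lemma sum_net_outflow:
  fixes f :: "'a \<Rightarrow> 'b::ab_group_add"
  assumes "finite A" "finite S"
  shows "(\<Sum>v\<in>S. (\<Sum>a\<in>{a\<in>A. tail a = v}. f a) - (\<Sum>a\<in>{a\<in>A. head a = v}. f a))
       = (\<Sum>a\<in>A. (if tail a \<in> S then f a else 0) - (if head a \<in> S then f a else 0))"
proof -
  have "(\<Sum>v\<in>S. \<Sum>a\<in>{a\<in>A. h a = v}. f a) = (\<Sum>a\<in>A. if h a \<in> S then f a else 0)"
    for h
  proof -
    have "(\<Sum>v\<in>S. \<Sum>a\<in>{a\<in>A. h a = v}. f a) = (\<Sum>v\<in>S. \<Sum>a\<in>A. if h a = v then f a else 0)"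
      using assms(1) by (simp add: sum.inter_filter)
    also have "\<dots> = (\<Sum>a\<in>A. \<Sum>v\<in>S. if h a = v then f a else 0)"
      by (rule sum.swap)
    also have "\<dots> = (\<Sum>a\<in>A. if h a \<in> S then f a else 0)"
      using assms(2) by (simp add: sum.delta)
    finally show ?thesis .
  qed
  then show ?thesis by (simp add: sum_subtractf)
qed

definition oriented_flow :: "('a \<Rightarrow> nat) \<Rightarrow> ('a \<Rightarrow> real) \<Rightarrow> nat \<Rightarrow> 'a \<Rightarrow> real" where
  "oriented_flow tail f u a = (if tail a = u then f a else - f a)"

lemma potential_drop_oriented_flow:
  assumes "joins tail head a u v" "u \<noteq> v"
    and "\<pi> (tail a) - \<pi> (head a) = \<beta> a * sgn (f a) * \<bar>f a\<bar> powr r"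
  shows "\<pi> u - \<pi> v = \<beta> a * sgn (oriented_flow tail f u a) * \<bar>oriented_flow tail f u a\<bar> powr r"
proof -
  from assms(1) consider "tail a = u" "head a = v" | "tail a = v" "head a = u"
    unfolding joins_def by blast
  then show ?thesis
  proof cases
    case 1
    then show ?thesis using assms(3) by (simp add: oriented_flow_def)
  next
    case 2
    then have "\<pi> u - \<pi> v = - (\<pi> (tail a) - \<pi> (head a))" by simp
    also have "\<dots> = \<beta> a * sgn (oriented_flow tail f u a) * \<bar>oriented_flow tail f u a\<bar> powr r"
      using assms(2,3) 2 by (simp add: oriented_flow_def sgn_minus)
    finally show ?thesis .
  qed
qed

lemma crossing_flow_layer_arc:
  assumes "joins tail head a (j - 1) j" "1 \<le> i" "1 \<le> j" "j \<le> k"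
  shows "(if tail a \<in> {i..k} then f a else 0) - (if head a \<in> {i..k} then f a else 0)
    = (if joins tail head a (i - 1) i then - oriented_flow tail f (i - 1) a else 0)"
proof (cases "j = i")
  case True
  then show ?thesis using assms unfolding joins_def oriented_flow_def by auto
next
  case False
  have "\<not> joins tail head a (i - 1) i"
  proof
    assume "joins tail head a (i - 1) i"
    then have "max (tail a) (head a) = i" using assms(2) unfolding joins_def by auto
    moreover have "max (tail a) (head a) = j" using assms(1,3) unfolding joins_def by auto
    ultimately show False using False by simp
  qed
  moreover have "j - 1 \<le> tail a" "tail a \<le> j" "j - 1 \<le> head a" "head a \<le> j"
    using assms(1) unfolding joins_def by auto
  then have "tail a \<in> {i..k} \<longleftrightarrow> head a \<in> {i..k}"
    using assms(4) False by (cases "j < i") auto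
  ultimately show ?thesis by simp
qed

lemma multi_path_layer_flow:
  assumes net: "multi_path_network k A tail head"
    and flow: "potential_flow {0..k} A tail head \<beta> r 0 k d \<pi> f"
    and i: "i \<in> {1..k}"
  shows "(\<Sum>a\<in>arcs_between A tail head i. oriented_flow tail f (i - 1) a) = d"
proof -
  have fin: "finite A" and arcs: "\<forall>a\<in>A. \<exists>j\<in>{1..k}. joins tail head a (j - 1) j"
    using net unfolding multi_path_network_def by auto
  have "- d = (\<Sum>v\<in>{i..k}. if v = k then - d else 0)"
    using i by (simp add: sum.delta')
  also have "\<dots> = (\<Sum>v\<in>{i..k}. (\<Sum>a\<in>{a\<in>A. tail a = v}. f a) - (\<Sum>a\<in>{a\<in>A. head a = v}. f a))"
    using flow i unfolding potential_flow_def by (intro sum.cong) auto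
  also have "\<dots> = (\<Sum>a\<in>A. (if tail a \<in> {i..k} then f a else 0) - (if head a \<in> {i..k} then f a else 0))"
    using fin by (rule sum_net_outflow) simp
  also have "\<dots> = (\<Sum>a\<in>A. if joins tail head a (i - 1) i then - oriented_flow tail f (i - 1) a else 0)"
  proof (rule sum.cong)
    fix a assume "a \<in> A"
    then obtain j where "j \<in> {1..k}" "joins tail head a (j - 1) j" using arcs by blast
    then show "(if tail a \<in> {i..k} then f a else 0) - (if head a \<in> {i..k} then f a else 0)
      = (if joins tail head a (i - 1) i then - oriented_flow tail f (i - 1) a else 0)"
      using i by (intro crossing_flow_layer_arc) auto
  qed simp
  also have "\<dots> = - (\<Sum>a\<in>arcs_between A tail head i. oriented_flow tail f (i - 1) a)"
    using fin unfolding arcs_between_def by (simp only: sum.inter_filter[symmetric] sum_negf)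
  finally show ?thesis by simp
qed

lemma multi_path_layer_conductance:
  assumes r: "r > 0" and net: "multi_path_network k A tail head"
    and \<beta>: "\<forall>a\<in>A. \<beta> a > 0"
    and flow: "potential_flow {0..k} A tail head \<beta> r 0 k d \<pi> f"
    and d: "d > 0" and i: "i \<in> {1..k}"
  shows "\<pi> (i - 1) > \<pi> i"
    and "(\<Sum>a\<in>arcs_between A tail head i. conductance \<beta> r a) = d * (\<pi> (i - 1) - \<pi> i) powr (- 1 / r)"
proof -
  define D where "D = \<pi> (i - 1) - \<pi> i"
  let ?A = "arcs_between A tail head i"
  have arc_flow: "oriented_flow tail f (i - 1) a = sgn D * (\<bar>D\<bar> / \<beta> a) powr (1 / r)"
    if "a \<in> ?A" for a
  proof (rule sgn_powr_inverse)
    have a: "a \<in> A" "joins tail head a (i - 1) i"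
      using that unfolding arcs_between_def by auto
    then show "\<beta> a > 0" using \<beta> by blast
    show "D = \<beta> a * sgn (oriented_flow tail f (i - 1) a) * \<bar>oriented_flow tail f (i - 1) a\<bar> powr r"
      unfolding D_def using a i flow unfolding potential_flow_def
      by (intro potential_drop_oriented_flow) auto
  qed (rule r)
  have d_eq: "d = sgn D * (\<Sum>a\<in>?A. (\<bar>D\<bar> / \<beta> a) powr (1 / r))"
    using multi_path_layer_flow[OF net flow i] arc_flow by (simp add: sum_distrib_left)
  have "(\<Sum>a\<in>?A. (\<bar>D\<bar> / \<beta> a) powr (1 / r)) \<ge> 0"
    by (intro sum_nonneg) simp
  with d d_eq have D: "D > 0" by (auto simp: sgn_if split: if_splits)
  then show "\<pi> (i - 1) > \<pi> i" unfolding D_def by simp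
  have "(\<bar>D\<bar> / \<beta> a) powr (1 / r) = D powr (1 / r) * conductance \<beta> r a" if "a \<in> ?A" for a
  proof -
    have "\<beta> a > 0" using that \<beta> unfolding arcs_between_def by auto
    then show ?thesis
      using D by (simp add: conductance_def powr_divide powr_minus_divide)
  qed
  then have "d = D powr (1 / r) * (\<Sum>a\<in>?A. conductance \<beta> r a)"
    using D d_eq by (simp add: sum_distrib_left)
  then show "(\<Sum>a\<in>?A. conductance \<beta> r a) = d * (\<pi> (i - 1) - \<pi> i) powr (- 1 / r)"
    using D unfolding D_def by (simp add: powr_minus_divide field_simps)
qed

theorem theorem2:
  fixes k :: nat and A :: "'a set" and tail head :: "'a \<Rightarrow> nat"
    and \<beta> :: "'a \<Rightarrow> real" and r d \<pi>bar :: real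
    and \<pi> :: "nat \<Rightarrow> real" and f :: "'a \<Rightarrow> real"
  assumes "r > 0"
    and "multi_path_network k A tail head"
    and "\<forall>a\<in>A. \<beta> a > 0"
    and "potential_flow {0..k} A tail head \<beta> r 0 k d \<pi> f"
    and "d > 0"
    and "\<pi>bar > 0"
    and "\<forall>v\<in>{0..k}. 0 \<le> \<pi> v \<and> \<pi> v \<le> \<pi>bar"
  shows "1 / (real k * real k powr (1 / r))
           * (\<Sum>i=1..k. \<Sum>a\<in>arcs_between A tail head i. conductance \<beta> r a)
         \<ge> d / \<pi>bar powr (1 / r)"
proof -
  define D where "D i = \<pi> (i - 1) - \<pi> i" for i
  have k: "k \<ge> 1" using assms(2) unfolding multi_path_network_def by simp
  have D_pos: "\<forall>i\<in>{1..k}. D i > 0"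
    using multi_path_layer_conductance(1)[OF assms(1-5)] unfolding D_def by simp
  have conductances: "(\<Sum>i=1..k. \<Sum>a\<in>arcs_between A tail head i. conductance \<beta> r a)
      = d * (\<Sum>i=1..k. D i powr (- (1 / r)))"
    using multi_path_layer_conductance(2)[OF assms(1-5)]
    by (simp add: D_def sum_distrib_left)
  have "\<pi> 0 \<le> \<pi>bar" "0 \<le> \<pi> k"
    using assms(7) by auto
  then have "(\<Sum>i=1..k. D i) \<le> \<pi>bar"
    unfolding D_def sum_pred_diff_telescope by linarith
  then have jensen: "real k powr (1 + 1 / r) * \<pi>bar powr (- (1 / r)) \<le> (\<Sum>i=1..k. D i powr (- (1 / r)))"
    using sum_powr_neg_lower_bound[of "1 / r" "{1..k}" D] assms(1) k D_pos by simp
  have "d / \<pi>bar powr (1 / r)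
      = 1 / (real k * real k powr (1 / r)) * (d * (real k powr (1 + 1 / r) * \<pi>bar powr (- (1 / r))))"
    using k by (simp add: powr_add powr_minus_divide)
  also have "\<dots> \<le> 1 / (real k * real k powr (1 / r)) * (d * (\<Sum>i=1..k. D i powr (- (1 / r))))"
    using jensen assms(5) by (intro mult_left_mono) auto
  finally show ?thesis unfolding conductances .
qed

end
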